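(* For every round $t$ and every node $s\in S$, the GLR statistic $Z_s(t)=\inf_{\bm{\lambda}\in\mathrm{Alt}_s(\hat{\bm{\mu}}(t))}\sum_{\ell\in\mathcal{D}(s)}N_\ell(t)\,d(\hat\mu_\ell(t),\lambda_\ell)$ satisfies the following recursion. If $a_{s_0}(\hat{\bm{\mu}}(t))=$'win': for a leaf $s$, $Z_s(t)=N_s(t)d(\hat\mu_s(t),\theta)$ if $\hat\mu_s(t)\ge\theta$ and $Z_s(t)=0$ otherwise; $Z_s(t)=\sum_{c\in\mathcal{C}(s)}Z_c(t)$ if $L(s)=$MAX; $Z_s(t)=\min_{c\in\mathcal{C}(s)}Z_c(t)$ if $L(s)=$MIN. If $a_{s_0}(\hat{\bm{\mu}}(t))=$'lose': for a leaf $s$, $Z_s(t)=N_s(t)d(\hat\mu_s(t),\theta)$ if $\hat\mu_s(t)<\theta$ and $Z_s(t)=0$ otherwise; $Z_s(t)=\sum_{c\in\mathcal{C}(s)}Z_c(t)$ if $L(s)=$MIN; $Z_s(t)=\min_{c\in\mathcal{C}(s)}Z_c(t)$ if $L(s)=$MAX.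
   Context: $\mathcal{T}$ is a finite rooted tree with node set $S$, root $s_0$, children sets $\mathcal{C}(s)$, leaf set $\mathcal{L}(\mathcal{T})$, and $\mathcal{D}(s)$ the set of leaves descending from $s$ ($\{s\}$ for a leaf). Internal nodes have labels $L(s)\in\{\text{MAX},\text{MIN}\}$. $X\subseteq\mathbb{R}$ is the mean-parameter set of a one-parameter exponential family, $d(x,y)$ the KL divergence between members with means $x$ and $y$, $\theta\in X$ a threshold. For $\bm{\lambda}$: $V_s(\bm{\lambda})=\lambda_s$ at a leaf, max (resp. min) of children's values at MAX (resp. MIN) nodes; $a_s(\bm{\lambda})=$'win' iff $V_s(\bm{\lambda})\ge\theta$, else 'lose'. At each round a leaf is sampled and a reward observed; $N_\ell(t)$ is the number of samples of leaf $\ell$ up to round $t$ and $\hat\mu_\ell(t)\in X$ its empirical mean; $\hat{\bm{\mu}}(t)=(\hat\mu_\ell(t))_\ell$. $\mathrm{Alt}_s(\hat{\bm{\mu}}(t))=\{\bm{\lambda}\in X^{\mathcal{D}(s)}:a_s(\bm{\lambda})\neq a_{s_0}(\hat{\bm{\mu}}(t))\}$. *)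

theory Defs
  imports "HOL-Analysis.Analysis" "HOL-Library.FuncSet"
begin

datatype label = LMAX | LMIN

text \<open>Nodes of the
tree are its subtrees; the root is the tree itself.\<close>

datatype 'a gtree = Leaf 'a | Node label "'a gtree list"

fun leaves :: "'a gtree \<Rightarrow> 'a list" where
  "leaves (Leaf a) = [a]"
| "leaves (Node l cs) = concat (map leaves cs)"

definition desc :: "'a gtree \<Rightarrow> 'a set" where
  "desc s = set (leaves s)"

fun nodes_list :: "'a gtree \<Rightarrow> 'a gtree list" where
  "nodes_list (Leaf a) = [Leaf a]"
| "nodes_list (Node l cs) = Node l cs # concat (map nodes_list cs)"

definition nodes :: "'a gtree \<Rightarrow> 'a gtree set" where
  "nodes T = set (nodes_list T)"

fun children :: "'a gtree \<Rightarrow> 'a gtree set" where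
  "children (Leaf a) = {}"
| "children (Node l cs) = set cs"

text \<open>Well-formed tree: every internal node has at least one child and leaf
identifiers are pairwise distinct (so distinct nodes are distinct objects).\<close>
fun internal_nonempty :: "'a gtree \<Rightarrow> bool" where
  "internal_nonempty (Leaf a) = True"
| "internal_nonempty (Node l cs) = (cs \<noteq> [] \<and> (\<forall>c\<in>set cs. internal_nonempty c))"

definition wf_tree :: "'a gtree \<Rightarrow> bool" where
  "wf_tree T \<longleftrightarrow> internal_nonempty T \<and> distinct (leaves T)"

fun val :: "'a gtree \<Rightarrow> ('a \<Rightarrow> real) \<Rightarrow> real" where
  "val (Leaf a) lam = lam a"
| "val (Node LMAX cs) lam = Max (set (map (\<lambda>c. val c lam) cs))"
| "val (Node LMIN cs) lam = Min (set (map (\<lambda>c. val c lam) cs))"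

text \<open>a_s(lambda) = 'win' iff V_s(lambda) >= theta (True encodes 'win').\<close>
definition win :: "real \<Rightarrow> 'a gtree \<Rightarrow> ('a \<Rightarrow> real) \<Rightarrow> bool" where
  "win \<theta> s lam \<longleftrightarrow> val s lam \<ge> \<theta>"

text \<open>A (regular, minimal) one-parameter exponential family with densities
h(x) exp(eta x - b(eta)), natural parameter eta in an open interval Theta,
and log-partition function b, which is differentiable with strictly
increasing derivative (strict convexity).  The mean of the member with
natural parameter eta is b'(eta).\<close>
definition exp_family :: "(real \<Rightarrow> real) \<Rightarrow> real set \<Rightarrow> bool" where
  "exp_family b \<Theta> \<longleftrightarrow> open \<Theta> \<and> is_interval \<Theta> \<and> \<Theta> \<noteq> {} \<and>
     (\<forall>\<eta>\<in>\<Theta>. (b has_real_derivative deriv b \<eta>) (at \<eta>)) \<and>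
     strict_mono_on \<Theta> (deriv b)"

definition mean_set :: "(real \<Rightarrow> real) \<Rightarrow> real set \<Rightarrow> real set" where
  "mean_set b \<Theta> = deriv b ` \<Theta>"

definition nat_param :: "(real \<Rightarrow> real) \<Rightarrow> real set \<Rightarrow> real \<Rightarrow> real" where
  "nat_param b \<Theta> x = inv_into \<Theta> (deriv b) x"

text \<open>d(x,y) = KL(P_x || P_y) between the members with means x and y:
 b(eta_y) - b(eta_x) - x (eta_y - eta_x).\<close>
definition kl :: "(real \<Rightarrow> real) \<Rightarrow> real set \<Rightarrow> real \<Rightarrow> real \<Rightarrow> real" where
  "kl b \<Theta> x y = b (nat_param b \<Theta> y) - b (nat_param b \<Theta> x)
                   - x * (nat_param b \<Theta> y - nat_param b \<Theta> x)"

definition Alt :: "(real \<Rightarrow> real) \<Rightarrow> real set \<Rightarrow> real \<Rightarrow> 'a gtree \<Rightarrow> 'a gtree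
                   \<Rightarrow> ('a \<Rightarrow> real) \<Rightarrow> ('a \<Rightarrow> real) set" where
  "Alt b \<Theta> \<theta> T s mu = {lam \<in> desc s \<rightarrow>\<^sub>E mean_set b \<Theta>. win \<theta> s lam \<noteq> win \<theta> T mu}"

definition GLR :: "(real \<Rightarrow> real) \<Rightarrow> real set \<Rightarrow> real \<Rightarrow> 'a gtree \<Rightarrow> 'a gtree
                   \<Rightarrow> ('a \<Rightarrow> nat) \<Rightarrow> ('a \<Rightarrow> real) \<Rightarrow> real" where
  "GLR b \<Theta> \<theta> T s N mu =
     Inf ((\<lambda>lam. \<Sum>l\<in>desc s. real (N l) * kl b \<Theta> (mu l) (lam l)) ` Alt b \<Theta> \<theta> T s mu)"

end

theory Submission
  imports Defs
begin

text \<open>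
  At an internal node the answer is a Boolean combination of the answers of the children:
  with the root winning, a MAX node loses iff all its children lose, a MIN node loses iff
  one child loses (dually when the root loses). An alternative that must flip every child
  splits into independent alternatives on the disjoint leaf sets of the children, so the
  infimum of the separable cost is the sum of the children's infima. An alternative that
  must flip one child c can keep all other leaves at their empirical means at zero cost,
  so the infimum is the minimum over c. At a leaf, d(x, .) decreases below x and increases
  above x (convexity of the log-partition function), so the infimum over the far side of
  the threshold is 0 if x already lies there and N d(x, theta) otherwise; below theta it
  is not attained but approached, by continuity of the log-partition function.
\<close>

section \<open>Exponential families\<close>

lemma exp_familyD:
  assumes "exp_family b \<Theta>"
  shows "open \<Theta>" "is_interval \<Theta>"
    "\<And>\<eta>. \<eta> \<in> \<Theta> \<Longrightarrow> (b has_real_derivative deriv b \<eta>) (at \<eta>)"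
    "strict_mono_on \<Theta> (deriv b)"
  using assms unfolding exp_family_def by auto

lemma nat_param_mem:
  assumes "x \<in> mean_set b \<Theta>"
  shows "nat_param b \<Theta> x \<in> \<Theta>"
  using assms unfolding mean_set_def nat_param_def by (rule inv_into_into)

lemma deriv_nat_param:
  assumes "x \<in> mean_set b \<Theta>"
  shows "deriv b (nat_param b \<Theta> x) = x"
  using assms unfolding mean_set_def nat_param_def by (rule f_inv_into_f)

lemma nat_param_deriv:
  assumes "exp_family b \<Theta>" "\<eta> \<in> \<Theta>"
  shows "nat_param b \<Theta> (deriv b \<eta>) = \<eta>"
  unfolding nat_param_def
  using strict_mono_on_imp_inj_on[OF exp_familyD(4)[OF assms(1)]] assms(2) by (rule inv_into_f_f)

lemma mean_set_deriv:
  "\<eta> \<in> \<Theta> \<Longrightarrow> deriv b \<eta> \<in> mean_set b \<Theta>"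
  unfolding mean_set_def by (rule imageI)

lemma nat_param_mono:
  assumes "exp_family b \<Theta>" "x \<in> mean_set b \<Theta>" "y \<in> mean_set b \<Theta>" "x \<le> y"
  shows "nat_param b \<Theta> x \<le> nat_param b \<Theta> y"
proof (rule ccontr)
  assume "\<not> nat_param b \<Theta> x \<le> nat_param b \<Theta> y"
  then have "deriv b (nat_param b \<Theta> y) < deriv b (nat_param b \<Theta> x)"
    using strict_mono_onD[OF exp_familyD(4)[OF assms(1)] nat_param_mem[OF assms(3)] nat_param_mem[OF assms(2)]]
    by simp
  then show False
    using assms(4) by (simp add: deriv_nat_param assms(2,3))
qed

lemma exp_family_tangent_bounds:
  assumes ef: "exp_family b \<Theta>" and "\<eta>\<^sub>1 \<in> \<Theta>" "\<eta>\<^sub>2 \<in> \<Theta>" "\<eta>\<^sub>1 \<le> \<eta>\<^sub>2"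
  shows "deriv b \<eta>\<^sub>1 * (\<eta>\<^sub>2 - \<eta>\<^sub>1) \<le> b \<eta>\<^sub>2 - b \<eta>\<^sub>1"
    and "b \<eta>\<^sub>2 - b \<eta>\<^sub>1 \<le> deriv b \<eta>\<^sub>2 * (\<eta>\<^sub>2 - \<eta>\<^sub>1)"
proof -
  have between: "\<eta> \<in> \<Theta>" if "\<eta>\<^sub>1 \<le> \<eta>" "\<eta> \<le> \<eta>\<^sub>2" for \<eta>
    using mem_is_interval_1_I[OF exp_familyD(2)[OF ef]] assms(2,3) that by blast
  have "deriv b \<eta>\<^sub>1 * (\<eta>\<^sub>2 - \<eta>\<^sub>1) \<le> b \<eta>\<^sub>2 - b \<eta>\<^sub>1 \<and> b \<eta>\<^sub>2 - b \<eta>\<^sub>1 \<le> deriv b \<eta>\<^sub>2 * (\<eta>\<^sub>2 - \<eta>\<^sub>1)"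
  proof (cases "\<eta>\<^sub>1 = \<eta>\<^sub>2")
    case False
    then have "\<eta>\<^sub>1 < \<eta>\<^sub>2" using assms(4) by simp
    then obtain z where z: "\<eta>\<^sub>1 < z" "z < \<eta>\<^sub>2" "b \<eta>\<^sub>2 - b \<eta>\<^sub>1 = (\<eta>\<^sub>2 - \<eta>\<^sub>1) * deriv b z"
      using MVT2[of \<eta>\<^sub>1 \<eta>\<^sub>2 b "deriv b"] exp_familyD(3)[OF ef between] by blast
    have "deriv b \<eta>\<^sub>1 < deriv b z" "deriv b z < deriv b \<eta>\<^sub>2"
      using z(1,2) assms(2,3) between[of z]
      by (auto intro: strict_mono_onD[OF exp_familyD(4)[OF ef]])
    then show ?thesis
      using z \<open>\<eta>\<^sub>1 < \<eta>\<^sub>2\<close> by (simp add: mult.commute mult_right_mono)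
  qed simp
  then show "deriv b \<eta>\<^sub>1 * (\<eta>\<^sub>2 - \<eta>\<^sub>1) \<le> b \<eta>\<^sub>2 - b \<eta>\<^sub>1" "b \<eta>\<^sub>2 - b \<eta>\<^sub>1 \<le> deriv b \<eta>\<^sub>2 * (\<eta>\<^sub>2 - \<eta>\<^sub>1)"
    by simp_all
qed

lemma kl_self [simp]: "kl b \<Theta> x x = 0"
  unfolding kl_def by simp

lemma kl_antimono_below:
  assumes ef: "exp_family b \<Theta>" and X: "y\<^sub>1 \<in> mean_set b \<Theta>" "y\<^sub>2 \<in> mean_set b \<Theta>"
    and "y\<^sub>1 \<le> y\<^sub>2" "y\<^sub>2 \<le> x"
  shows "kl b \<Theta> x y\<^sub>2 \<le> kl b \<Theta> x y\<^sub>1"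
proof -
  let ?\<eta>\<^sub>1 = "nat_param b \<Theta> y\<^sub>1" and ?\<eta>\<^sub>2 = "nat_param b \<Theta> y\<^sub>2"
  have "?\<eta>\<^sub>1 \<le> ?\<eta>\<^sub>2" using nat_param_mono[OF ef X \<open>y\<^sub>1 \<le> y\<^sub>2\<close>] .
  have "b ?\<eta>\<^sub>2 - b ?\<eta>\<^sub>1 \<le> y\<^sub>2 * (?\<eta>\<^sub>2 - ?\<eta>\<^sub>1)"
    using exp_family_tangent_bounds(2)[OF ef nat_param_mem[OF X(1)] nat_param_mem[OF X(2)] \<open>?\<eta>\<^sub>1 \<le> ?\<eta>\<^sub>2\<close>]
    by (simp add: deriv_nat_param X(2))
  also have "\<dots> \<le> x * (?\<eta>\<^sub>2 - ?\<eta>\<^sub>1)"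
    using \<open>?\<eta>\<^sub>1 \<le> ?\<eta>\<^sub>2\<close> \<open>y\<^sub>2 \<le> x\<close> by (simp add: mult_right_mono)
  finally show ?thesis unfolding kl_def by (simp add: algebra_simps)
qed

lemma kl_mono_above:
  assumes ef: "exp_family b \<Theta>" and X: "y\<^sub>1 \<in> mean_set b \<Theta>" "y\<^sub>2 \<in> mean_set b \<Theta>"
    and "x \<le> y\<^sub>1" "y\<^sub>1 \<le> y\<^sub>2"
  shows "kl b \<Theta> x y\<^sub>1 \<le> kl b \<Theta> x y\<^sub>2"
proof -
  let ?\<eta>\<^sub>1 = "nat_param b \<Theta> y\<^sub>1" and ?\<eta>\<^sub>2 = "nat_param b \<Theta> y\<^sub>2"
  have "?\<eta>\<^sub>1 \<le> ?\<eta>\<^sub>2" using nat_param_mono[OF ef X \<open>y\<^sub>1 \<le> y\<^sub>2\<close>] .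
  have "x * (?\<eta>\<^sub>2 - ?\<eta>\<^sub>1) \<le> y\<^sub>1 * (?\<eta>\<^sub>2 - ?\<eta>\<^sub>1)"
    using \<open>?\<eta>\<^sub>1 \<le> ?\<eta>\<^sub>2\<close> \<open>x \<le> y\<^sub>1\<close> by (simp add: mult_right_mono)
  also have "\<dots> \<le> b ?\<eta>\<^sub>2 - b ?\<eta>\<^sub>1"
    using exp_family_tangent_bounds(1)[OF ef nat_param_mem[OF X(1)] nat_param_mem[OF X(2)] \<open>?\<eta>\<^sub>1 \<le> ?\<eta>\<^sub>2\<close>]
    by (simp add: deriv_nat_param X(1))
  finally show ?thesis unfolding kl_def by (simp add: algebra_simps)
qed

lemma kl_nonneg:
  assumes "exp_family b \<Theta>" "x \<in> mean_set b \<Theta>" "y \<in> mean_set b \<Theta>"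
  shows "0 \<le> kl b \<Theta> x y"
  using kl_antimono_below[OF assms(1,3,2), of x] kl_mono_above[OF assms(1,2,3), of x]
  by (cases "y \<le> x") simp_all

lemma eventually_at_left_in_open:
  fixes \<eta>\<^sub>0 :: real
  assumes "open \<Theta>" "\<eta>\<^sub>0 \<in> \<Theta>"
  shows "eventually (\<lambda>\<eta>. \<eta> \<in> \<Theta> \<and> \<eta> < \<eta>\<^sub>0) (at_left \<eta>\<^sub>0)"
  using eventually_nhds_in_open[OF assms] unfolding eventually_at_filter
  by (auto elim: eventually_mono)

lemma mean_set_below_nonempty:
  assumes ef: "exp_family b \<Theta>" and th: "\<theta> \<in> mean_set b \<Theta>"
  shows "\<exists>y\<in>mean_set b \<Theta>. y < \<theta>"
proof -
  obtain \<eta> where \<eta>: "\<eta> \<in> \<Theta>" "\<eta> < nat_param b \<Theta> \<theta>"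
    using eventually_happens'[OF trivial_limit_at_left_real
        eventually_at_left_in_open[OF exp_familyD(1)[OF ef] nat_param_mem[OF th]]] by blast
  then have "deriv b \<eta> < \<theta>"
    using strict_mono_onD[OF exp_familyD(4)[OF ef] _ nat_param_mem[OF th]] by (simp add: deriv_nat_param th)
  then show ?thesis using mean_set_deriv[OF \<eta>(1)] by blast
qed

section \<open>Infima of the divergence beyond a threshold\<close>

lemma Inf_le_tendsto:
  fixes S :: "'b::{conditionally_complete_linorder, linorder_topology} set"
  assumes "(f \<longlongrightarrow> l) F" "F \<noteq> bot" "eventually (\<lambda>x. f x \<in> S) F" "bdd_below S"
  shows "Inf S \<le> l"
  using assms(1) _ assms(2)
  by (rule tendsto_lowerbound) (use assms(3,4) in \<open>auto elim: eventually_mono intro: cInf_lower\<close>)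

lemma Inf_kl_eq_0:
  assumes ef: "exp_family b \<Theta>" and "x \<in> A" "A \<subseteq> mean_set b \<Theta>" "0 \<le> n"
  shows "Inf ((\<lambda>y. n * kl b \<Theta> x y) ` A) = 0"
  using assms by (intro cInf_eq_minimum) (auto intro!: image_eqI[of 0 _ x] mult_nonneg_nonneg kl_nonneg[OF ef])

text \<open>Below theta the infimum is not attained: it is approached as the natural parameter
  increases to that of theta, by continuity of b.\<close>

lemma Inf_kl_below_threshold:
  assumes ef: "exp_family b \<Theta>" and th: "\<theta> \<in> mean_set b \<Theta>" and x: "x \<in> mean_set b \<Theta>"
    and n: "0 \<le> n"
  shows "Inf ((\<lambda>y. n * kl b \<Theta> x y) ` {y \<in> mean_set b \<Theta>. y < \<theta>})
         = (if \<theta> \<le> x then n * kl b \<Theta> x \<theta> else 0)"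
proof (cases "\<theta> \<le> x")
  case True
  let ?S = "(\<lambda>y. n * kl b \<Theta> x y) ` {y \<in> mean_set b \<Theta>. y < \<theta>}"
  let ?\<eta>\<^sub>0 = "nat_param b \<Theta> \<theta>" and ?\<eta>\<^sub>x = "nat_param b \<Theta> x"
  define f where "f \<eta> = n * (b \<eta> - b ?\<eta>\<^sub>x - x * (\<eta> - ?\<eta>\<^sub>x))" for \<eta>
  have "Inf ?S \<le> f ?\<eta>\<^sub>0"
  proof (rule Inf_le_tendsto)
    have "isCont b ?\<eta>\<^sub>0"
      using exp_familyD(3)[OF ef nat_param_mem[OF th]] by (rule DERIV_isCont)
    then have "(b \<longlongrightarrow> b ?\<eta>\<^sub>0) (at_left ?\<eta>\<^sub>0)"
      unfolding isCont_def by (rule tendsto_within_subset) simp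
    then show "(f \<longlongrightarrow> f ?\<eta>\<^sub>0) (at_left ?\<eta>\<^sub>0)"
      unfolding f_def by (intro tendsto_intros)
    show "eventually (\<lambda>\<eta>. f \<eta> \<in> ?S) (at_left ?\<eta>\<^sub>0)"
      using eventually_at_left_in_open[OF exp_familyD(1)[OF ef] nat_param_mem[OF th]]
    proof (rule eventually_mono)
      fix \<eta> assume \<eta>: "\<eta> \<in> \<Theta> \<and> \<eta> < ?\<eta>\<^sub>0"
      then have "deriv b \<eta> < \<theta>"
        using strict_mono_onD[OF exp_familyD(4)[OF ef] _ nat_param_mem[OF th]]
        by (simp add: deriv_nat_param th)
      moreover have "f \<eta> = n * kl b \<Theta> x (deriv b \<eta>)"
        unfolding f_def kl_def using \<eta> by (simp add: nat_param_deriv[OF ef])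
      ultimately show "f \<eta> \<in> ?S" using \<eta> mean_set_deriv by blast
    qed
    show "bdd_below ?S"
      using kl_nonneg[OF ef x] n by (auto intro!: bdd_belowI[of _ 0])
  qed simp
  moreover have "n * kl b \<Theta> x \<theta> \<le> Inf ?S"
  proof (rule cInf_greatest)
    show "?S \<noteq> {}" using mean_set_below_nonempty[OF ef th] by blast
    show "n * kl b \<Theta> x \<theta> \<le> z" if "z \<in> ?S" for z
      using that True kl_antimono_below[OF ef _ th, of _ x] n by (auto intro: mult_left_mono)
  qed
  ultimately show ?thesis using True by (simp add: f_def kl_def)
qed (use assms in \<open>auto intro: Inf_kl_eq_0\<close>)

lemma Inf_kl_above_threshold:
  assumes ef: "exp_family b \<Theta>" and th: "\<theta> \<in> mean_set b \<Theta>" and x: "x \<in> mean_set b \<Theta>"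
    and n: "0 \<le> n"
  shows "Inf ((\<lambda>y. n * kl b \<Theta> x y) ` {y \<in> mean_set b \<Theta>. \<theta> \<le> y})
         = (if x < \<theta> then n * kl b \<Theta> x \<theta> else 0)"
proof (cases "x < \<theta>")
  case True
  then show ?thesis
    using th kl_mono_above[OF ef th, of _ x] n
    by (intro cInf_eq_minimum) (auto intro: mult_left_mono)
qed (use assms in \<open>auto intro: Inf_kl_eq_0\<close>)

section \<open>Infima of separable costs\<close>

lemma PiE_glue:
  assumes disj: "disjoint_family_on D C" and F: "\<And>c. c \<in> C \<Longrightarrow> F c \<in> D c \<rightarrow>\<^sub>E X"
  obtains lam where "lam \<in> (\<Union>c\<in>C. D c) \<rightarrow>\<^sub>E X" "\<And>c. c \<in> C \<Longrightarrow> restrict lam (D c) = F c"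
proof
  let ?lam = "restrict (\<lambda>l. F (SOME c. c \<in> C \<and> l \<in> D c) l) (\<Union>c\<in>C. D c)"
  have pick: "(SOME c. c \<in> C \<and> l \<in> D c) = c" if "c \<in> C" "l \<in> D c" for c l
    using disj that by (intro some_equality) (auto simp: disjoint_family_on_def)
  show "?lam \<in> (\<Union>c\<in>C. D c) \<rightarrow>\<^sub>E X"
    using F pick by (auto simp: PiE_iff)
  show "restrict ?lam (D c) = F c" if "c \<in> C" for c
  proof
    fix l
    show "restrict ?lam (D c) l = F c l"
    proof (cases "l \<in> D c")
      case True
      then show ?thesis using pick[OF that True] that by auto
    next
      case False
      then show ?thesis using PiE_arb[OF F[OF that] False] by simp
    qed
  qed
qed

lemma Inf_sum_Pi:
  fixes f :: "'c \<Rightarrow> 'b \<Rightarrow> real"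
  assumes fin: "finite C" and ne: "\<And>c. c \<in> C \<Longrightarrow> A c \<noteq> {}"
    and bdd: "\<And>c. c \<in> C \<Longrightarrow> bdd_below (f c ` A c)"
  shows "Inf ((\<lambda>a. \<Sum>c\<in>C. f c (a c)) ` Pi C A) = (\<Sum>c\<in>C. Inf (f c ` A c))"
proof (rule antisym)
  let ?S = "(\<lambda>a. \<Sum>c\<in>C. f c (a c)) ` Pi C A"
  have lower: "(\<Sum>c\<in>C. Inf (f c ` A c)) \<le> (\<Sum>c\<in>C. f c (a c))" if "a \<in> Pi C A" for a
    using that bdd by (intro sum_mono cInf_lower) auto
  show "(\<Sum>c\<in>C. Inf (f c ` A c)) \<le> Inf ?S"
    using ne lower by (intro cInf_greatest) auto
  show "Inf ?S \<le> (\<Sum>c\<in>C. Inf (f c ` A c))"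
  proof (rule field_le_epsilon)
    fix e :: real assume "0 < e"
    define \<delta> where "\<delta> = e / (card C + 1)"
    have "0 < \<delta>" using \<open>0 < e\<close> by (simp add: \<delta>_def)
    have "\<exists>y\<in>A c. f c y < Inf (f c ` A c) + \<delta>" if "c \<in> C" for c
      using cInf_lessD[of "f c ` A c" "Inf (f c ` A c) + \<delta>"] ne[OF that] \<open>0 < \<delta>\<close> by auto
    then have "\<forall>c\<in>C. \<exists>y\<in>A c. f c y < Inf (f c ` A c) + \<delta>" by blast
    then obtain a where a: "a \<in> Pi C A" "\<And>c. c \<in> C \<Longrightarrow> f c (a c) < Inf (f c ` A c) + \<delta>"
      by (metis Pi_I)
    have "Inf ?S \<le> (\<Sum>c\<in>C. f c (a c))"
      using a(1) bdd_belowI2[OF lower] by (intro cInf_lower) auto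
    also have "\<dots> \<le> (\<Sum>c\<in>C. Inf (f c ` A c) + \<delta>)"
      using a(2) by (intro sum_mono less_imp_le)
    also have "\<dots> = (\<Sum>c\<in>C. Inf (f c ` A c)) + card C * \<delta>"
      by (simp add: sum.distrib)
    also have "card C * \<delta> \<le> e"
      using \<open>0 < e\<close> by (simp add: \<delta>_def field_simps)
    finally show "Inf ?S \<le> (\<Sum>c\<in>C. Inf (f c ` A c)) + e" by simp
  qed
qed


lemma Inf_sum_restrict_all:
  fixes g :: "'a \<Rightarrow> 'b \<Rightarrow> real"
  assumes fin: "finite C" "\<And>c. c \<in> C \<Longrightarrow> finite (D c)" and disj: "disjoint_family_on D C"
    and ne: "\<And>c. c \<in> C \<Longrightarrow> A c \<noteq> {}" and A: "\<And>c. c \<in> C \<Longrightarrow> A c \<subseteq> D c \<rightarrow>\<^sub>E X"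
    and nonneg: "\<And>l y. l \<in> (\<Union>c\<in>C. D c) \<Longrightarrow> y \<in> X \<Longrightarrow> 0 \<le> g l y"
  shows "Inf ((\<lambda>lam. \<Sum>l\<in>(\<Union>c\<in>C. D c). g l (lam l)) `
              {lam \<in> (\<Union>c\<in>C. D c) \<rightarrow>\<^sub>E X. \<forall>c\<in>C. restrict lam (D c) \<in> A c})
       = (\<Sum>c\<in>C. Inf ((\<lambda>lam. \<Sum>l\<in>D c. g l (lam l)) ` A c))"
proof -
  let ?U = "\<Union>c\<in>C. D c"
  let ?cost = "\<lambda>E lam. \<Sum>l\<in>E. g l (lam l)"
  have split: "?cost ?U lam = (\<Sum>c\<in>C. ?cost (D c) (restrict lam (D c)))" for lam
    using fin disj by (simp add: sum.UNION_disjoint_family)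
  have "(?cost ?U) ` {lam \<in> ?U \<rightarrow>\<^sub>E X. \<forall>c\<in>C. restrict lam (D c) \<in> A c}
      = (\<lambda>a. \<Sum>c\<in>C. ?cost (D c) (a c)) ` Pi C A"
  proof (intro equalityI subsetI)
    fix z assume "z \<in> (?cost ?U) ` {lam \<in> ?U \<rightarrow>\<^sub>E X. \<forall>c\<in>C. restrict lam (D c) \<in> A c}"
    then obtain lam where "\<forall>c\<in>C. restrict lam (D c) \<in> A c" "z = ?cost ?U lam" by blast
    then show "z \<in> (\<lambda>a. \<Sum>c\<in>C. ?cost (D c) (a c)) ` Pi C A"
      by (intro image_eqI[of _ _ "\<lambda>c. restrict lam (D c)"]) (simp_all add: split)
  next
    fix z assume "z \<in> (\<lambda>a. \<Sum>c\<in>C. ?cost (D c) (a c)) ` Pi C A"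
    then obtain a where a: "a \<in> Pi C A" "z = (\<Sum>c\<in>C. ?cost (D c) (a c))" by blast
    have "a c \<in> D c \<rightarrow>\<^sub>E X" if "c \<in> C" for c
      using a(1) A that by blast
    then obtain lam where lam: "lam \<in> ?U \<rightarrow>\<^sub>E X" "\<And>c. c \<in> C \<Longrightarrow> restrict lam (D c) = a c"
      using PiE_glue[OF disj] by blast
    then show "z \<in> (?cost ?U) ` {lam \<in> ?U \<rightarrow>\<^sub>E X. \<forall>c\<in>C. restrict lam (D c) \<in> A c}"
      using a by (intro image_eqI[of _ _ lam]) (auto simp: split)
  qed
  moreover have "bdd_below (?cost (D c) ` A c)" if "c \<in> C" for c
    using that A by (intro bdd_belowI2[of _ 0] sum_nonneg nonneg) (auto simp: PiE_iff)
  ultimately show ?thesis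
    using Inf_sum_Pi[of C A "\<lambda>c. ?cost (D c)"] fin(1) ne by simp
qed

text \<open>The zero-cost values m complete a point of a single block A c to a feasible point
  of the same cost.\<close>

lemma Inf_sum_restrict_ex:
  fixes g :: "'a \<Rightarrow> 'b \<Rightarrow> real"
  assumes fin: "finite C" "\<And>c. c \<in> C \<Longrightarrow> finite (D c)" and "C \<noteq> {}"
    and ne: "\<And>c. c \<in> C \<Longrightarrow> A c \<noteq> {}" and A: "\<And>c. c \<in> C \<Longrightarrow> A c \<subseteq> D c \<rightarrow>\<^sub>E X"
    and nonneg: "\<And>l y. l \<in> (\<Union>c\<in>C. D c) \<Longrightarrow> y \<in> X \<Longrightarrow> 0 \<le> g l y"
    and m: "\<And>l. l \<in> (\<Union>c\<in>C. D c) \<Longrightarrow> m l \<in> X \<and> g l (m l) = 0"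
  shows "Inf ((\<lambda>lam. \<Sum>l\<in>(\<Union>c\<in>C. D c). g l (lam l)) `
              {lam \<in> (\<Union>c\<in>C. D c) \<rightarrow>\<^sub>E X. \<exists>c\<in>C. restrict lam (D c) \<in> A c})
       = Min ((\<lambda>c. Inf ((\<lambda>lam. \<Sum>l\<in>D c. g l (lam l)) ` A c)) ` C)"
proof -
  let ?U = "\<Union>c\<in>C. D c"
  let ?cost = "\<lambda>E lam. \<Sum>l\<in>E. g l (lam l)"
  let ?S = "?cost ?U ` {lam \<in> ?U \<rightarrow>\<^sub>E X. \<exists>c\<in>C. restrict lam (D c) \<in> A c}"
  let ?I = "\<lambda>c. Inf (?cost (D c) ` A c)"
  have finU: "finite ?U" using fin by blast
  have bdd: "bdd_below (?cost (D c) ` A c)" if "c \<in> C" for c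
    using that A by (intro bdd_belowI2[of _ 0] sum_nonneg nonneg) (auto simp: PiE_iff)
  have extend: "?cost (D c) a \<in> ?S" if c: "c \<in> C" and a: "a \<in> A c" for c a
  proof -
    let ?lam = "restrict (\<lambda>l. if l \<in> D c then a l else m l) ?U"
    have aX: "a \<in> D c \<rightarrow>\<^sub>E X" using A c a by blast
    have restrict_eq: "restrict ?lam (D c) = a"
      using c PiE_arb[OF aX] by (auto simp: fun_eq_iff)
    have lam_in: "?lam \<in> ?U \<rightarrow>\<^sub>E X"
      using aX m by (auto simp: PiE_iff)
    have "?cost ?U ?lam = ?cost (?U - D c) ?lam + ?cost (D c) ?lam"
      using c finU by (intro sum.subset_diff) auto
    also have "?cost (?U - D c) ?lam = 0"
      using m by (intro sum.neutral) auto
    also have "?cost (D c) ?lam = ?cost (D c) a"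
      using c by (intro sum.cong) auto
    finally have cost_eq: "?cost ?U ?lam = ?cost (D c) a" by simp
    have "?lam \<in> {lam \<in> ?U \<rightarrow>\<^sub>E X. \<exists>c\<in>C. restrict lam (D c) \<in> A c}"
      using lam_in c by (intro CollectI conjI bexI[of _ c]) (simp_all only: restrict_eq a)
    then have "?cost ?U ?lam \<in> ?S" by (rule imageI)
    then show ?thesis by (simp only: cost_eq)
  qed
  have "Min (?I ` C) \<in> ?I ` C"
    using fin(1) \<open>C \<noteq> {}\<close> by (intro Min_in finite_imageI) auto
  then obtain c\<^sub>0 where c\<^sub>0_min: "Min (?I ` C) = ?I c\<^sub>0" and c\<^sub>0: "c\<^sub>0 \<in> C"
    by (rule imageE)
  obtain a\<^sub>0 where "a\<^sub>0 \<in> A c\<^sub>0"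
    using ne[OF c\<^sub>0] by blast
  have bdd_S: "bdd_below ?S"
  proof (rule bdd_belowI2[of _ 0])
    fix lam assume "lam \<in> {lam \<in> ?U \<rightarrow>\<^sub>E X. \<exists>c\<in>C. restrict lam (D c) \<in> A c}"
    then show "0 \<le> ?cost ?U lam" by (intro sum_nonneg nonneg) (auto simp: PiE_iff)
  qed
  show ?thesis
  proof (rule antisym)
    show "Inf ?S \<le> Min (?I ` C)"
      unfolding c\<^sub>0_min
    proof (rule cInf_mono[OF _ bdd_S])
      show "?cost (D c\<^sub>0) ` A c\<^sub>0 \<noteq> {}" using \<open>a\<^sub>0 \<in> A c\<^sub>0\<close> by blast
      fix w assume "w \<in> ?cost (D c\<^sub>0) ` A c\<^sub>0"
      then obtain a where "a \<in> A c\<^sub>0" "w = ?cost (D c\<^sub>0) a" by blast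
      then show "\<exists>z\<in>?S. z \<le> w" using extend[OF c\<^sub>0] by (intro bexI[of _ w]) simp_all
    qed
    show "Min (?I ` C) \<le> Inf ?S"
    proof (rule cInf_greatest)
      show "?S \<noteq> {}" using extend[OF c\<^sub>0 \<open>a\<^sub>0 \<in> A c\<^sub>0\<close>] by (rule ex_in_conv[THEN iffD1, OF exI])
      fix z assume "z \<in> ?S"
      then obtain lam c where lam: "lam \<in> ?U \<rightarrow>\<^sub>E X" "c \<in> C" "restrict lam (D c) \<in> A c"
        "z = ?cost ?U lam" by blast
      have "Min (?I ` C) \<le> ?I c" using fin lam(2) by simp
      also have "\<dots> \<le> ?cost (D c) (restrict lam (D c))"
        using lam(2,3) bdd by (intro cInf_lower imageI)
      also have "\<dots> = ?cost (D c) lam" by simp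
      also have "\<dots> \<le> ?cost ?U lam"
      proof (rule sum_mono2[OF finU])
        show "D c \<subseteq> ?U" using lam(2) by blast
        show "0 \<le> g l (lam l)" if "l \<in> ?U - D c" for l
          using that lam(1) by (intro nonneg) (auto simp: PiE_iff)
      qed
      finally show "Min (?I ` C) \<le> z" using lam(4) by simp
    qed
  qed
qed

section \<open>Game trees\<close>

lemma desc_Leaf [simp]: "desc (Leaf l) = {l}"
  by (simp add: desc_def)

lemma desc_Node [simp]: "desc (Node lab cs) = (\<Union>c\<in>set cs. desc c)"
  by (simp add: desc_def)

lemma finite_desc [simp]: "finite (desc s)"
  by (simp add: desc_def)

lemma wf_tree_child:
  assumes "wf_tree (Node lab cs)" "c \<in> set cs"
  shows "wf_tree c"
  using assms by (auto simp: wf_tree_def distinct_concat_iff)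

lemma internal_nonempty_child:
  "wf_tree (Node lab cs) \<Longrightarrow> c \<in> set cs \<Longrightarrow> internal_nonempty c"
  using wf_tree_child by (auto simp: wf_tree_def)

lemma wf_tree_disjoint_desc:
  assumes "wf_tree (Node lab cs)"
  shows "disjoint_family_on desc (set cs)"
proof -
  have "distinct (concat (map leaves cs)) \<Longrightarrow> disjoint_family_on desc (set cs)"
    by (induction cs) (auto simp: disjoint_family_on_def desc_def)
  then show ?thesis using assms by (simp add: wf_tree_def)
qed

lemma desc_subset_nodes: "s \<in> nodes T \<Longrightarrow> desc s \<subseteq> desc T"
  unfolding nodes_def by (induction T) auto

lemma wf_tree_nodes: "s \<in> nodes T \<Longrightarrow> wf_tree T \<Longrightarrow> wf_tree s"
  unfolding nodes_def by (induction T) (auto dest: wf_tree_child)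

lemma val_cong:
  "(\<And>l. l \<in> desc s \<Longrightarrow> lam l = lam' l) \<Longrightarrow> val s lam = val s lam'"
  by (induction s lam rule: val.induct) (auto intro!: arg_cong[of _ _ Max] arg_cong[of _ _ Min] image_cong)

lemma val_const:
  "internal_nonempty s \<Longrightarrow> val s (\<lambda>_. y) = y"
proof (induction s "\<lambda>_::'a. y" rule: val.induct)
  case (2 cs)
  then have "set (map (\<lambda>c. val c (\<lambda>_. y)) cs) = {y}" by (cases cs) auto
  then show ?case by simp
next
  case (3 cs)
  then have "set (map (\<lambda>c. val c (\<lambda>_. y)) cs) = {y}" by (cases cs) auto
  then show ?case by simp
qed simp

lemma win_restrict_desc [simp]: "win \<theta> s (restrict lam (desc s)) = win \<theta> s lam"
  unfolding win_def by (subst val_cong[of s _ lam]) simp_all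

lemma win_Node_LMAX:
  "cs \<noteq> [] \<Longrightarrow> win \<theta> (Node LMAX cs) lam \<longleftrightarrow> (\<exists>c\<in>set cs. win \<theta> c lam)"
  unfolding win_def by (simp add: Max_ge_iff)

lemma win_Node_LMIN:
  "cs \<noteq> [] \<Longrightarrow> win \<theta> (Node LMIN cs) lam \<longleftrightarrow> (\<forall>c\<in>set cs. win \<theta> c lam)"
  unfolding win_def by simp

section \<open>The GLR recursion\<close>

lemma Alt_nonempty:
  assumes ef: "exp_family b \<Theta>" and th: "\<theta> \<in> mean_set b \<Theta>" and "internal_nonempty s"
  shows "Alt b \<Theta> \<theta> T s mu \<noteq> {}"
proof -
  obtain y where y: "y \<in> mean_set b \<Theta>" "y < \<theta> \<longleftrightarrow> win \<theta> T mu"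
    using mean_set_below_nonempty[OF ef th] th by (cases "win \<theta> T mu") auto
  have "val s (restrict (\<lambda>_. y) (desc s)) = y"
    using val_cong[of s "restrict (\<lambda>_. y) (desc s)" "\<lambda>_. y"] val_const[OF assms(3)] by simp
  then have "restrict (\<lambda>_. y) (desc s) \<in> Alt b \<Theta> \<theta> T s mu"
    using y by (auto simp: Alt_def win_def)
  then show ?thesis by blast
qed

lemma Alt_Node_all:
  assumes "\<And>lam. win \<theta> (Node lab cs) lam \<noteq> win \<theta> T mu \<longleftrightarrow> (\<forall>c\<in>set cs. win \<theta> c lam \<noteq> win \<theta> T mu)"
  shows "Alt b \<Theta> \<theta> T (Node lab cs) mu =
    {lam \<in> (\<Union>c\<in>set cs. desc c) \<rightarrow>\<^sub>E mean_set b \<Theta>. \<forall>c\<in>set cs. restrict lam (desc c) \<in> Alt b \<Theta> \<theta> T c mu}"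
  using assms by (auto simp: Alt_def PiE_iff)

lemma Alt_Node_ex:
  assumes "\<And>lam. win \<theta> (Node lab cs) lam \<noteq> win \<theta> T mu \<longleftrightarrow> (\<exists>c\<in>set cs. win \<theta> c lam \<noteq> win \<theta> T mu)"
  shows "Alt b \<Theta> \<theta> T (Node lab cs) mu =
    {lam \<in> (\<Union>c\<in>set cs. desc c) \<rightarrow>\<^sub>E mean_set b \<Theta>. \<exists>c\<in>set cs. restrict lam (desc c) \<in> Alt b \<Theta> \<theta> T c mu}"
  using assms by (auto simp: Alt_def PiE_iff)

lemma GLR_Node_all:
  assumes ef: "exp_family b \<Theta>" and th: "\<theta> \<in> mean_set b \<Theta>" and wf: "wf_tree (Node lab cs)"
    and mu: "\<And>l. l \<in> desc (Node lab cs) \<Longrightarrow> mu l \<in> mean_set b \<Theta>"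
    and "\<And>lam. win \<theta> (Node lab cs) lam \<noteq> win \<theta> T mu \<longleftrightarrow> (\<forall>c\<in>set cs. win \<theta> c lam \<noteq> win \<theta> T mu)"
  shows "GLR b \<Theta> \<theta> T (Node lab cs) N mu = (\<Sum>c\<in>set cs. GLR b \<Theta> \<theta> T c N mu)"
  unfolding GLR_def desc_Node Alt_Node_all[OF assms(5)]
proof (rule Inf_sum_restrict_all)
  show "disjoint_family_on desc (set cs)" using wf by (rule wf_tree_disjoint_desc)
  show "Alt b \<Theta> \<theta> T c mu \<noteq> {}" if "c \<in> set cs" for c
    using Alt_nonempty[OF ef th internal_nonempty_child[OF wf that]] .
  show "0 \<le> real (N l) * kl b \<Theta> (mu l) y" if "l \<in> (\<Union>c\<in>set cs. desc c)" "y \<in> mean_set b \<Theta>" for l y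
    using kl_nonneg[OF ef mu that(2)] that(1) by simp
qed (auto simp: Alt_def)

lemma GLR_Node_ex:
  assumes ef: "exp_family b \<Theta>" and th: "\<theta> \<in> mean_set b \<Theta>" and wf: "wf_tree (Node lab cs)"
    and mu: "\<And>l. l \<in> desc (Node lab cs) \<Longrightarrow> mu l \<in> mean_set b \<Theta>"
    and "\<And>lam. win \<theta> (Node lab cs) lam \<noteq> win \<theta> T mu \<longleftrightarrow> (\<exists>c\<in>set cs. win \<theta> c lam \<noteq> win \<theta> T mu)"
  shows "GLR b \<Theta> \<theta> T (Node lab cs) N mu = Min ((\<lambda>c. GLR b \<Theta> \<theta> T c N mu) ` set cs)"
  unfolding GLR_def desc_Node Alt_Node_ex[OF assms(5)]
proof (rule Inf_sum_restrict_ex)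
  show "set cs \<noteq> {}" using wf by (simp add: wf_tree_def)
  show "Alt b \<Theta> \<theta> T c mu \<noteq> {}" if "c \<in> set cs" for c
    using Alt_nonempty[OF ef th internal_nonempty_child[OF wf that]] .
  show "0 \<le> real (N l) * kl b \<Theta> (mu l) y" if "l \<in> (\<Union>c\<in>set cs. desc c)" "y \<in> mean_set b \<Theta>" for l y
    using kl_nonneg[OF ef mu that(2)] that(1) by simp
  show "mu l \<in> mean_set b \<Theta> \<and> real (N l) * kl b \<Theta> (mu l) (mu l) = 0"
    if "l \<in> (\<Union>c\<in>set cs. desc c)" for l
    using mu that by simp
qed (auto simp: Alt_def)


lemma image_PiE_singleton:
  "(\<lambda>lam. h (lam l)) ` {lam \<in> {l} \<rightarrow>\<^sub>E X. P (lam l)} = h ` {y \<in> X. P y}"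
proof (intro equalityI subsetI)
  fix z assume "z \<in> h ` {y \<in> X. P y}"
  then obtain y where "y \<in> X" "P y" "z = h y" by blast
  then show "z \<in> (\<lambda>lam. h (lam l)) ` {lam \<in> {l} \<rightarrow>\<^sub>E X. P (lam l)}"
    by (intro image_eqI[of _ _ "restrict (\<lambda>_. y) {l}"]) auto
qed auto

lemma GLR_Leaf:
  assumes ef: "exp_family b \<Theta>" and th: "\<theta> \<in> mean_set b \<Theta>" and mu: "mu l \<in> mean_set b \<Theta>"
  shows "GLR b \<Theta> \<theta> T (Leaf l) N mu =
    (if win \<theta> T mu then (if \<theta> \<le> mu l then real (N l) * kl b \<Theta> (mu l) \<theta> else 0)
     else (if mu l < \<theta> then real (N l) * kl b \<Theta> (mu l) \<theta> else 0))"
proof -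
  have "GLR b \<Theta> \<theta> T (Leaf l) N mu = Inf ((\<lambda>lam. real (N l) * kl b \<Theta> (mu l) (lam l)) `
      {lam \<in> {l} \<rightarrow>\<^sub>E mean_set b \<Theta>. (\<theta> \<le> lam l) \<noteq> win \<theta> T mu})"
    unfolding GLR_def Alt_def win_def[of \<theta> "Leaf l"] by simp
  also have "\<dots> =
      Inf ((\<lambda>y. real (N l) * kl b \<Theta> (mu l) y) ` {y \<in> mean_set b \<Theta>. (\<theta> \<le> y) \<noteq> win \<theta> T mu})"
    using image_PiE_singleton[of "\<lambda>y. real (N l) * kl b \<Theta> (mu l) y" l "mean_set b \<Theta>"
        "\<lambda>y. (\<theta> \<le> y) \<noteq> win \<theta> T mu"]
    by (rule arg_cong)
  also have "{y \<in> mean_set b \<Theta>. (\<theta> \<le> y) \<noteq> win \<theta> T mu} =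
      (if win \<theta> T mu then {y \<in> mean_set b \<Theta>. y < \<theta>} else {y \<in> mean_set b \<Theta>. \<theta> \<le> y})"
    by auto
  finally show ?thesis
    using Inf_kl_below_threshold[OF ef th mu] Inf_kl_above_threshold[OF ef th mu] by simp
qed

lemma GLR_Node_LMAX:
  assumes "exp_family b \<Theta>" "\<theta> \<in> mean_set b \<Theta>" "wf_tree (Node LMAX cs)"
    "\<And>l. l \<in> desc (Node LMAX cs) \<Longrightarrow> mu l \<in> mean_set b \<Theta>"
  shows "GLR b \<Theta> \<theta> T (Node LMAX cs) N mu =
    (if win \<theta> T mu then \<Sum>c\<in>set cs. GLR b \<Theta> \<theta> T c N mu
     else Min ((\<lambda>c. GLR b \<Theta> \<theta> T c N mu) ` set cs))"
proof -
  have "cs \<noteq> []" using assms(3) by (simp add: wf_tree_def)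
  then show ?thesis
    using GLR_Node_all[OF assms] GLR_Node_ex[OF assms] by (simp add: win_Node_LMAX)
qed

lemma GLR_Node_LMIN:
  assumes "exp_family b \<Theta>" "\<theta> \<in> mean_set b \<Theta>" "wf_tree (Node LMIN cs)"
    "\<And>l. l \<in> desc (Node LMIN cs) \<Longrightarrow> mu l \<in> mean_set b \<Theta>"
  shows "GLR b \<Theta> \<theta> T (Node LMIN cs) N mu =
    (if win \<theta> T mu then Min ((\<lambda>c. GLR b \<Theta> \<theta> T c N mu) ` set cs)
     else \<Sum>c\<in>set cs. GLR b \<Theta> \<theta> T c N mu)"
proof -
  have "cs \<noteq> []" using assms(3) by (simp add: wf_tree_def)
  then show ?thesis
    using GLR_Node_all[OF assms] GLR_Node_ex[OF assms] by (simp add: win_Node_LMIN)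
qed

theorem theorem3:
  fixes T :: "'a gtree" and b :: "real \<Rightarrow> real" and \<Theta> :: "real set" and \<theta> :: real
    and N :: "nat \<Rightarrow> 'a \<Rightarrow> nat" and mu :: "nat \<Rightarrow> 'a \<Rightarrow> real"
  assumes "wf_tree T"
    and "exp_family b \<Theta>"
    and "\<theta> \<in> mean_set b \<Theta>"
    and "\<And>t l. l \<in> desc T \<Longrightarrow> mu t l \<in> mean_set b \<Theta>"
  shows "\<forall>t. \<forall>s\<in>nodes T.
    (win \<theta> T (mu t) \<longrightarrow>
       (\<forall>l. s = Leaf l \<longrightarrow> GLR b \<Theta> \<theta> T s (N t) (mu t) =
            (if mu t l \<ge> \<theta> then real (N t l) * kl b \<Theta> (mu t l) \<theta> else 0)) \<and>
       (\<forall>cs. s = Node LMAX cs \<longrightarrow> GLR b \<Theta> \<theta> T s (N t) (mu t) =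
            (\<Sum>c\<in>children s. GLR b \<Theta> \<theta> T c (N t) (mu t))) \<and>
       (\<forall>cs. s = Node LMIN cs \<longrightarrow> GLR b \<Theta> \<theta> T s (N t) (mu t) =
            Min ((\<lambda>c. GLR b \<Theta> \<theta> T c (N t) (mu t)) ` children s))) \<and>
    (\<not> win \<theta> T (mu t) \<longrightarrow>
       (\<forall>l. s = Leaf l \<longrightarrow> GLR b \<Theta> \<theta> T s (N t) (mu t) =
            (if mu t l < \<theta> then real (N t l) * kl b \<Theta> (mu t l) \<theta> else 0)) \<and>
       (\<forall>cs. s = Node LMIN cs \<longrightarrow> GLR b \<Theta> \<theta> T s (N t) (mu t) =
            (\<Sum>c\<in>children s. GLR b \<Theta> \<theta> T c (N t) (mu t))) \<and>
       (\<forall>cs. s = Node LMAX cs \<longrightarrow> GLR b \<Theta> \<theta> T s (N t) (mu t) =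
            Min ((\<lambda>c. GLR b \<Theta> \<theta> T c (N t) (mu t)) ` children s)))"
proof -
  have wf: "wf_tree s" and mu: "\<And>l. l \<in> desc s \<Longrightarrow> mu t l \<in> mean_set b \<Theta>"
    if "s \<in> nodes T" for s t
    using wf_tree_nodes[OF that assms(1)] desc_subset_nodes[OF that] assms(4) by auto
  have leaf: "GLR b \<Theta> \<theta> T (Leaf l) (N t) (mu t) =
    (if win \<theta> T (mu t) then (if \<theta> \<le> mu t l then real (N t l) * kl b \<Theta> (mu t l) \<theta> else 0)
     else (if mu t l < \<theta> then real (N t l) * kl b \<Theta> (mu t l) \<theta> else 0))"
    if "Leaf l \<in> nodes T" for l t
    using GLR_Leaf[OF assms(2,3), of "mu t" l T "N t"] mu[OF that, of l] by simp
  show ?thesis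
    using leaf GLR_Node_LMAX[OF assms(2,3) wf mu] GLR_Node_LMIN[OF assms(2,3) wf mu] by (auto simp: not_le)
qed

end
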